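(* Let $d,g\ge 1$ be integers, $n=dg$, and let $\pi$ be a permutation of $\{0,\dots,n-1\}$ such that $\pi(i)\neq i$ for all $i$. Then any routing of $\pi$ on the network $\mathrm{POPS}(d,g)$ uses at least $\lceil d/g\rceil$ slots.
   Context: The network $\mathrm{POPS}(d,g)$ has $n=dg$ processors indexed $0,\dots,n-1$; processor $i$ belongs to group $\mathrm{group}(i):=\lfloor i/d\rfloor\in\{0,\dots,g-1\}$. For each pair of groups $a,b$ there is a coupler $c(b,a)$ whose sources are the processors of group $a$ and whose destinations are the processors of group $b$ ($g^2$ couplers in total). Processor $i$ can transmit to the couplers $c(a,\mathrm{group}(i))$, $a=0,\dots,g-1$, and receive from the couplers $c(\mathrm{group}(i),b)$, $b=0,\dots,g-1$. In one slot each processor, in parallel, performs local computation, sends one packet to any subset of its transmitters, and receives a packet from one of its receivers; no two processors may send to the same coupler in the same slot. Processors may store packets between slots. Routing a permutation $\pi$ means: initially processor $i$ holds packet $p_i$ with destination $\pi(i)$, and at the end each $p_i$ must be at processor $\pi(i)$. *)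

theory Defs
  imports Complex_Main "HOL-Combinatorics.Permutations"
begin

(* POPS(d,g): n = d*g processors 0..n-1, processor i in group i div d.
   Coupler c(a,b) has sources = group b, destinations = group a.
   Packets are identified by the index of their origin processor: packet p_i is i.

   A schedule is given by three functions indexed by slot t and processor i:
     sendp t i :: nat option  -- the packet processor i transmits in slot t (None = no transmission)
     cpl t i :: nat set     -- the set of groups a such that i transmits to coupler c(a, group i)
     rcv t j :: nat option  -- the group b such that j listens to coupler c(group j, b) (None = none)
*)

definition grp :: "nat \<Rightarrow> nat \<Rightarrow> nat" where
  "grp d i = i div d"

definition received ::
  "nat \<Rightarrow> nat \<Rightarrow> (nat \<Rightarrow> nat \<Rightarrow> nat option) \<Rightarrow> (nat \<Rightarrow> nat \<Rightarrow> nat set)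
    \<Rightarrow> (nat \<Rightarrow> nat \<Rightarrow> nat option) \<Rightarrow> nat \<Rightarrow> nat \<Rightarrow> nat set" where
  "received d n sendp cpl rcv t j =
     {p. \<exists>b i. rcv t j = Some b \<and> i < n \<and> grp d i = b \<and> grp d j \<in> cpl t i
              \<and> sendp t i = Some p}"

(* packets held (stored) by processor j at the beginning of slot t *)
fun held ::
  "nat \<Rightarrow> nat \<Rightarrow> (nat \<Rightarrow> nat \<Rightarrow> nat option) \<Rightarrow> (nat \<Rightarrow> nat \<Rightarrow> nat set)
    \<Rightarrow> (nat \<Rightarrow> nat \<Rightarrow> nat option) \<Rightarrow> nat \<Rightarrow> nat \<Rightarrow> nat set" where
  "held d n sendp cpl rcv 0 j = {j}"
| "held d n sendp cpl rcv (Suc t) j =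
     held d n sendp cpl rcv t j \<union> received d n sendp cpl rcv t j"

definition valid_schedule ::
  "nat \<Rightarrow> nat \<Rightarrow> nat \<Rightarrow> (nat \<Rightarrow> nat \<Rightarrow> nat option) \<Rightarrow> (nat \<Rightarrow> nat \<Rightarrow> nat set)
    \<Rightarrow> (nat \<Rightarrow> nat \<Rightarrow> nat option) \<Rightarrow> bool" where
  "valid_schedule d g T sendp cpl rcv \<longleftrightarrow>
     (\<forall>t<T. \<forall>i<d*g.
        (\<forall>p. sendp t i = Some p \<longrightarrow> p \<in> held d (d*g) sendp cpl rcv t i)
      \<and> (sendp t i = None \<longrightarrow> cpl t i = {})
      \<and> cpl t i \<subseteq> {..<g}
      \<and> (\<forall>b. rcv t i = Some b \<longrightarrow> b < g))
   \<and> (\<forall>t<T. \<forall>i<d*g. \<forall>i'<d*g. \<forall>a.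
        a \<in> cpl t i \<and> a \<in> cpl t i' \<and> grp d i = grp d i' \<longrightarrow> i = i')"

definition routes ::
  "nat \<Rightarrow> nat \<Rightarrow> (nat \<Rightarrow> nat) \<Rightarrow> nat \<Rightarrow> (nat \<Rightarrow> nat \<Rightarrow> nat option)
    \<Rightarrow> (nat \<Rightarrow> nat \<Rightarrow> nat set) \<Rightarrow> (nat \<Rightarrow> nat \<Rightarrow> nat option) \<Rightarrow> bool" where
  "routes d g \<pi> T sendp cpl rcv \<longleftrightarrow>
     valid_schedule d g T sendp cpl rcv \<and>
     (\<forall>i<d*g. i \<in> held d (d*g) sendp cpl rcv T (\<pi> i))"

end

theory Submission
  imports Defs
begin

(* All n = dg packets must leave their origin processors, so each one is sent through some
   coupler in some slot before T. A coupler carries at most one packet per slot, and there are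
   g^2 couplers, hence dg <= T g^2, i.e. T >= d/g. *)

definition transmits ::
  "nat \<Rightarrow> nat \<Rightarrow> (nat \<Rightarrow> nat \<Rightarrow> nat option) \<Rightarrow> (nat \<Rightarrow> nat \<Rightarrow> nat set)
    \<Rightarrow> nat \<Rightarrow> nat \<Rightarrow> nat \<Rightarrow> nat \<Rightarrow> bool" where
  "transmits d n sendp cpl t b a p \<longleftrightarrow>
     (\<exists>k<n. grp d k = b \<and> a \<in> cpl t k \<and> sendp t k = Some p)"

lemma held_imp_received:
  assumes "p \<in> held d n sendp cpl rcv t j"
  shows "p = j \<or> (\<exists>t'<t. p \<in> received d n sendp cpl rcv t' j)"
  using assms by (induction t) (auto intro: less_SucI)

lemma grp_less:
  assumes "k < d * g"
  shows "grp d k < g"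
  using assms unfolding grp_def by (simp add: less_mult_imp_div_less mult.commute)

lemma transmits_unique:
  assumes "valid_schedule d g T sendp cpl rcv" and "t < T"
    and "transmits d (d*g) sendp cpl t b a p" and "transmits d (d*g) sendp cpl t b a q"
  shows "p = q"
proof -
  obtain k k' where k: "k < d*g" "grp d k = b" "a \<in> cpl t k" "sendp t k = Some p"
    and k': "k' < d*g" "grp d k' = b" "a \<in> cpl t k'" "sendp t k' = Some q"
    using assms(3,4) unfolding transmits_def by blast
  have "k = k'"
    using assms(1,2) k k' unfolding valid_schedule_def by metis
  then show ?thesis using k k' by simp
qed

lemma moved_packet_transmitted:
  assumes "routes d g \<pi> T sendp cpl rcv" and "i < d*g" and "\<pi> i \<noteq> i"
  shows "\<exists>t<T. \<exists>b<g. \<exists>a<g. transmits d (d*g) sendp cpl t b a i"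
proof -
  have valid: "valid_schedule d g T sendp cpl rcv"
    and arrived: "i \<in> held d (d*g) sendp cpl rcv T (\<pi> i)"
    using assms(1,2) unfolding routes_def by auto
  obtain t where t: "t < T" and "i \<in> received d (d*g) sendp cpl rcv t (\<pi> i)"
    using held_imp_received[OF arrived] assms(3) by auto
  then obtain k where k: "k < d*g" "grp d (\<pi> i) \<in> cpl t k" "sendp t k = Some i"
    unfolding received_def by blast
  have "grp d (\<pi> i) < g"
    using valid t k(1,2) unfolding valid_schedule_def by blast
  moreover have "grp d k < g"
    using k(1) by (rule grp_less)
  ultimately show ?thesis
    using t k unfolding transmits_def by blast
qed

lemma card_le_card_if_unique_witnesses:
  assumes "finite B"
    and "\<forall>a\<in>A. \<exists>b\<in>B. R a b"
    and "\<And>a a' b. a \<in> A \<Longrightarrow> a' \<in> A \<Longrightarrow> b \<in> B \<Longrightarrow> R a b \<Longrightarrow> R a' b \<Longrightarrow> a = a'"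
  shows "card A \<le> card B"
proof -
  obtain f where f: "\<forall>a\<in>A. f a \<in> B \<and> R a (f a)"
    using assms(2) by metis
  have "inj_on f A"
    using f assms(3) by (metis inj_onI)
  moreover have "f ` A \<subseteq> B"
    using f by blast
  ultimately show ?thesis
    using card_inj_on_le assms(1) by blast
qed

lemma nat_ceiling_divide_le:
  assumes "d \<le> T * g" and "g > 0"
  shows "nat \<lceil>real d / real g\<rceil> \<le> T"
proof -
  have "real d / real g \<le> real T"
    using assms by (simp add: divide_le_eq) (metis of_nat_le_iff of_nat_mult)
  then show ?thesis
    by (simp add: le_nat_iff ceiling_le_iff)
qed

theorem proposition1:
  fixes d g T :: nat and \<pi> :: "nat \<Rightarrow> nat"
    and sendp :: "nat \<Rightarrow> nat \<Rightarrow> nat option" and cpl :: "nat \<Rightarrow> nat \<Rightarrow> nat set"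
    and rcv :: "nat \<Rightarrow> nat \<Rightarrow> nat option"
  assumes "d \<ge> 1" and "g \<ge> 1"
    and "\<pi> permutes {..<d*g}"
    and "\<forall>i<d*g. \<pi> i \<noteq> i"
    and "routes d g \<pi> T sendp cpl rcv"
  shows "T \<ge> nat (ceiling (real d / real g))"
proof -
  let ?slots = "{..<T} \<times> {..<g} \<times> {..<g}"
  have valid: "valid_schedule d g T sendp cpl rcv"
    using assms(5) unfolding routes_def by blast
  have "card {..<d*g} \<le> card ?slots"
  proof (rule card_le_card_if_unique_witnesses
      [where R = "\<lambda>i (t, b, a). transmits d (d*g) sendp cpl t b a i"])
    show "\<forall>i\<in>{..<d*g}. \<exists>x\<in>?slots. (\<lambda>(t, b, a). transmits d (d*g) sendp cpl t b a i) x"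
      using moved_packet_transmitted assms(4,5) by fastforce
  next
    fix i j x
    assume "x \<in> ?slots" "(\<lambda>(t, b, a). transmits d (d*g) sendp cpl t b a i) x"
      "(\<lambda>(t, b, a). transmits d (d*g) sendp cpl t b a j) x"
    then show "i = j"
      using transmits_unique[OF valid] by (cases x) auto
  qed simp
  then have "d * g \<le> T * g * g"
    by (simp add: card_cartesian_product)
  then show ?thesis
    using nat_ceiling_divide_le assms(2) by simp
qed

end
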